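(* Let $\rho>0$ and suppose that, for each value of $c^S>0$, the variable-window IPT thresholds satisfy $c_n^D=0$ for all $n\leq(1+\rho)\frac{c^S}{\underline{q}}$ (the values $c_n^D\geq0$ for larger $n$ being arbitrary). Then $$\limsup_{c^S\to\infty}\frac{\mathrm{WADD}(t_I)}{c^S}\leq\frac{2}{\underline{q}}.$$
   Context: Setup. Let $\mathcal{A}=\{a_1,\dots,a_m\}$ be a finite alphabet and $\mathcal{P}$ the set of probability mass functions (p.m.f.s) on $\mathcal{A}$. $I(f\|f')=\sum_{a}f(a)\log\frac{f(a)}{f'(a)}$ is the Kullback–Leibler divergence. A known pre-change p.m.f. $f_0\in\mathcal{P}$ is fixed. $q:\mathcal{P}\to\mathbb{R}$ is quasiconcave and $L$-Lipschitz with respect to $\ell_1$, with $q_0:=q(f_0)<0<\underline{q}$, and the set of possible post-change p.m.f.s $\mathcal{P}_1$ is a nonempty subset of $\{f: q(f)\geq\underline{q}\}$. Under $P_{f_1,t_1}$ (expectation $E_{f_1,t_1}$), $X_1,\dots,X_{t_1-1}$ are i.i.d. $f_0$ and $X_{t_1},X_{t_1+1},\dots$ are i.i.d. $f_1$, independent of the former. For $i\leq j$, $\hat f_{X_i^j}$ is the empirical p.m.f. of $X_i,\dots,X_j$. $(x)^+=\max\{x,0\}$. For a stopping time $t$, the worst average detection delay is $\mathrm{WADD}(t)=\sup_{f_1\in\mathcal{P}_1,\,t_1\geq1}\operatorname{ess\,sup}_{X_1^{t_1-1}}E_{f_1,t_1}\left((t-t_1+1)^+\mid X_1^{t_1-1}\right)$.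 Variable-window IPT. Parameters: $c^S>0$ and a sequence $(c_n^D)_{n\geq1}$ of nonnegative thresholds. For $n\geq1$ let $f_n^*=\arg\min_{f\in\mathcal{P}:\,q(f)\geq c^S/n}I(f\|f_0)$. Put $Q(i,j)=(j-i+1)q(\hat f_{X_i^j})$ for $i\leq j$ and $Q(j+1,j)=0$. Set $\tau_1=1$ and for $k\geq1$: $S_k=\max_{\tau_k\leq i\leq k+1}Q(i,k)$, with $i_k$ a maximizing index and $n_k=k-i_k+1$; $D_k=I(\hat f_{X_{i_k}^k}\|f_{n_k}^* )$; $\tau_{k+1}=k+1$ if $S_k\geq c^S$ and $D_k<c^D_{n_k}$ (restart), and $\tau_{k+1}=\tau_k$ otherwise. The IPT stopping time is $t_I=\inf\{k: S_k\geq c^S\text{ and }D_k\geq c^D_{n_k}\}$. *)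

theory Defs
  imports "HOL-Probability.Probability"
begin

definition KL :: "'a::finite pmf \<Rightarrow> 'a pmf \<Rightarrow> ereal" where
  "KL f g = (\<Sum>a\<in>UNIV. if pmf f a = 0 then 0
                       else if pmf g a = 0 then \<infinity>
                       else ereal (pmf f a * ln (pmf f a / pmf g a)))"

definition quasiconcave_pmf :: "('a pmf \<Rightarrow> real) \<Rightarrow> bool" where
  "quasiconcave_pmf q \<longleftrightarrow>
     (\<forall>f g h (\<theta>::real). 0 \<le> \<theta> \<and> \<theta> \<le> 1 \<and>
        (\<forall>a. pmf h a = \<theta> * pmf f a + (1 - \<theta>) * pmf g a)
        \<longrightarrow> min (q f) (q g) \<le> q h)"

definition lipschitz_l1_pmf :: "real \<Rightarrow> ('a::finite pmf \<Rightarrow> real) \<Rightarrow> bool" where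
  "lipschitz_l1_pmf L q \<longleftrightarrow>
     (\<forall>f g. \<bar>q f - q g\<bar> \<le> L * (\<Sum>a\<in>UNIV. \<bar>pmf f a - pmf g a\<bar>))"

definition emp :: "(nat \<Rightarrow> 'a) \<Rightarrow> nat \<Rightarrow> nat \<Rightarrow> 'a pmf" where
  "emp X i j = pmf_of_multiset (mset (map X [i..<Suc j]))"

(* Q(i,j) = (j-i+1) q(emp); equals 0 for i = j+1 *)
definition Qv :: "('a pmf \<Rightarrow> real) \<Rightarrow> (nat \<Rightarrow> 'a) \<Rightarrow> nat \<Rightarrow> nat \<Rightarrow> real" where
  "Qv q X i j = real (Suc j - i) * q (emp X i j)"

(* f^*_n = argmin { I(f||f0) : q(f) \<ge> c^S/n }; here c = c^S/n.
   If no minimiser exists we fall back to f0 (convention). *)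
definition fstar :: "('a::finite pmf \<Rightarrow> real) \<Rightarrow> 'a pmf \<Rightarrow> real \<Rightarrow> 'a pmf" where
  "fstar q f0 c = (if \<exists>f. is_arg_min (\<lambda>f. KL f f0) (\<lambda>f. c \<le> q f) f
                   then arg_min (\<lambda>f. KL f f0) (\<lambda>f. c \<le> q f) else f0)"

definition ipt_i :: "('a pmf \<Rightarrow> real) \<Rightarrow> (nat \<Rightarrow> 'a) \<Rightarrow> nat \<Rightarrow> nat \<Rightarrow> nat" where
  "ipt_i q X tau k = (SOME i. tau \<le> i \<and> i \<le> Suc k \<and>
        (\<forall>j. tau \<le> j \<and> j \<le> Suc k \<longrightarrow> Qv q X j k \<le> Qv q X i k))"

definition ipt_S :: "('a pmf \<Rightarrow> real) \<Rightarrow> (nat \<Rightarrow> 'a) \<Rightarrow> nat \<Rightarrow> nat \<Rightarrow> real" where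
  "ipt_S q X tau k = Qv q X (ipt_i q X tau k) k"

definition ipt_n :: "('a pmf \<Rightarrow> real) \<Rightarrow> (nat \<Rightarrow> 'a) \<Rightarrow> nat \<Rightarrow> nat \<Rightarrow> nat" where
  "ipt_n q X tau k = Suc k - ipt_i q X tau k"

definition ipt_D :: "('a::finite pmf \<Rightarrow> real) \<Rightarrow> 'a pmf \<Rightarrow> real \<Rightarrow> (nat \<Rightarrow> 'a) \<Rightarrow> nat \<Rightarrow> nat \<Rightarrow> ereal" where
  "ipt_D q f0 cS X tau k =
     KL (emp X (ipt_i q X tau k) k) (fstar q f0 (cS / real (ipt_n q X tau k)))"

(* restart times tau_k (tau_1 = 1; tau 0 is a dummy) *)
fun ipt_tau :: "('a::finite pmf \<Rightarrow> real) \<Rightarrow> 'a pmf \<Rightarrow> real \<Rightarrow> (nat \<Rightarrow> real) \<Rightarrow> (nat \<Rightarrow> 'a) \<Rightarrow> nat \<Rightarrow> nat" where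
  "ipt_tau q f0 cS cD X 0 = 1"
| "ipt_tau q f0 cS cD X (Suc k) =
     (let t = ipt_tau q f0 cS cD X k in
      if 1 \<le> k \<and> cS \<le> ipt_S q X t k \<and> ipt_D q f0 cS X t k < ereal (cD (ipt_n q X t k))
      then Suc k else t)"

definition ipt_stop :: "('a::finite pmf \<Rightarrow> real) \<Rightarrow> 'a pmf \<Rightarrow> real \<Rightarrow> (nat \<Rightarrow> real) \<Rightarrow> (nat \<Rightarrow> 'a) \<Rightarrow> nat \<Rightarrow> bool" where
  "ipt_stop q f0 cS cD X k \<longleftrightarrow>
     (let t = ipt_tau q f0 cS cD X k in
      1 \<le> k \<and> cS \<le> ipt_S q X t k \<and> ereal (cD (ipt_n q X t k)) \<le> ipt_D q f0 cS X t k)"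

definition tI :: "('a::finite pmf \<Rightarrow> real) \<Rightarrow> 'a pmf \<Rightarrow> real \<Rightarrow> (nat \<Rightarrow> real) \<Rightarrow> (nat \<Rightarrow> 'a) \<Rightarrow> enat" where
  "tI q f0 cS cD X = (if \<exists>k. ipt_stop q f0 cS cD X k
                       then enat (LEAST k. ipt_stop q f0 cS cD X k) else \<infinity>)"

definition delay :: "enat \<Rightarrow> nat \<Rightarrow> ennreal" where
  "delay t t1 = (case t of enat k \<Rightarrow> of_nat (Suc k - t1) | \<infinity> \<Rightarrow> \<infinity>)"

(* Given X_1^{t1-1} = x (a prefix of positive
   f0-probability), the post-change samples X_{t1}, X_{t1+1}, ... are i.i.d. f1
   and independent of the prefix, so the conditional expectation is the
   expectation over Y ~ f1^{\<infinity>} with X = x on {1..t1-1} and X = Y from t1 on;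
   the essential supremum over the prefix is the supremum over prefixes
   of positive probability (finite alphabet). *)
definition WADD :: "'a pmf \<Rightarrow> 'a pmf set \<Rightarrow> ((nat \<Rightarrow> 'a) \<Rightarrow> enat) \<Rightarrow> ennreal" where
  "WADD f0 P1 T =
    (SUP p \<in> {(f1, t1, x). f1 \<in> P1 \<and> 1 \<le> t1 \<and> (\<forall>l. 1 \<le> l \<and> l < t1 \<longrightarrow> 0 < pmf f0 (x l))}.
       (case p of (f1, t1, x) \<Rightarrow>
          \<integral>\<^sup>+ Y. delay (T (\<lambda>l. if l < t1 then x l else Y l)) t1
             \<partial>(PiM (UNIV :: nat set) (\<lambda>_. measure_pmf f1))))"

end

theory Submission
  imports Defs
begin

text \<open>Cut the post-change data into blocks of length \<open>b \<approx> \<delta> c\<^sup>S / qlow\<close>. By quasiconcavity, \<open>q\<close> of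
  the empirical pmf of consecutive blocks is at least its minimum over the blocks, so \<open>M \<approx> (1 + \<delta>) / \<delta>\<close>
  good blocks, i.e. blocks whose empirical pmf has \<open>q \<ge> qlow / (1 + \<delta>)\<close>, carry a window statistic
  \<open>Q \<ge> c\<^sup>S\<close>. On \<open>2M\<close> good blocks the test must stop: the first \<open>M\<close> force \<open>S\<^sub>k \<ge> c\<^sup>S\<close>; if the test
  restarts there, the \<open>M\<close> blocks after the next block boundary force a second crossing on a window of
  length at most \<open>(1 + 3\<delta>) c\<^sup>S / qlow\<close>, where \<open>c\<^sup>D = 0 \<le> D\<^sub>k\<close>. By the Lipschitz property and Hoeffding's
  inequality a block is bad with probability exponentially small in \<open>b\<close>, and disjoint epochs of \<open>2M\<close>
  blocks are independent, so the delay is at most a geometric number of epochs of length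
  \<open>2Mb \<approx> 2 (1 + 2\<delta>) c\<^sup>S / qlow\<close>. Letting \<open>c\<^sup>S \<rightarrow> \<infinity>\<close> and then \<open>\<delta> \<rightarrow> 0\<close> gives \<open>2 / qlow\<close>.\<close>

section \<open>Restarts and stopping of the test\<close>

lemma KL_nonneg: "0 \<le> KL f g"
proof -
  have term_ge: "ereal (pmf f a - pmf g a) \<le> (if pmf f a = 0 then 0
                   else if pmf g a = 0 then \<infinity> else ereal (pmf f a * ln (pmf f a / pmf g a)))"
    for a
  proof -
    consider "pmf f a = 0" | "pmf f a > 0" "pmf g a = 0" | "pmf f a > 0" "pmf g a > 0"
      using pmf_nonneg[of f a] pmf_nonneg[of g a] by linarith
    then show ?thesis
    proof cases
      case 3
      have "ln (pmf g a / pmf f a) \<le> pmf g a / pmf f a - 1"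
        using 3 by (intro ln_le_minus_one) simp
      then have "pmf f a * (1 - pmf g a / pmf f a) \<le> pmf f a * ln (pmf f a / pmf g a)"
        using 3 by (intro mult_left_mono) (auto simp: ln_div)
      then show ?thesis
        using 3 by (simp add: right_diff_distrib)
    qed simp_all
  qed
  have "ereal 0 = (\<Sum>a\<in>UNIV. ereal (pmf f a - pmf g a))"
    by (simp add: sum_subtractf sum_pmf_eq_1)
  also have "\<dots> \<le> KL f g"
    unfolding KL_def by (rule sum_mono) (rule term_ge)
  finally show ?thesis
    by (simp add: zero_ereal_def)
qed

lemma ipt_tau_le: "1 \<le> k \<Longrightarrow> ipt_tau q f0 cS cD X k \<le> k"
  by (induction k) (auto simp: Let_def le_Suc_eq)

lemma ipt_i_is_max:
  assumes "tau \<le> Suc k"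
  shows "tau \<le> ipt_i q X tau k" "ipt_i q X tau k \<le> Suc k"
    and "\<And>j. tau \<le> j \<Longrightarrow> j \<le> Suc k \<Longrightarrow> Qv q X j k \<le> Qv q X (ipt_i q X tau k) k"
proof -
  let ?V = "(\<lambda>j. Qv q X j k) ` {tau..Suc k}"
  have fin: "finite ?V" and ne: "?V \<noteq> {}"
    using assms by auto
  obtain i where i: "i \<in> {tau..Suc k}" "Qv q X i k = Max ?V"
    using Max_in[OF fin ne] by auto
  have "\<exists>i. tau \<le> i \<and> i \<le> Suc k \<and> (\<forall>j. tau \<le> j \<and> j \<le> Suc k \<longrightarrow> Qv q X j k \<le> Qv q X i k)"
    using i Max_ge[OF fin] by (intro exI[of _ i]) auto
  then have max: "tau \<le> ipt_i q X tau k \<and> ipt_i q X tau k \<le> Suc k \<and>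
      (\<forall>j. tau \<le> j \<and> j \<le> Suc k \<longrightarrow> Qv q X j k \<le> Qv q X (ipt_i q X tau k) k)"
    unfolding ipt_i_def by (rule someI_ex)
  then show "tau \<le> ipt_i q X tau k" "ipt_i q X tau k \<le> Suc k"
    by simp_all
  show "Qv q X j k \<le> Qv q X (ipt_i q X tau k) k" if "tau \<le> j" "j \<le> Suc k" for j
    using max that by blast
qed

lemma Qv_le_ipt_S: "tau \<le> j \<Longrightarrow> j \<le> Suc k \<Longrightarrow> Qv q X j k \<le> ipt_S q X tau k"
  unfolding ipt_S_def by (rule ipt_i_is_max(3)) auto

lemma ipt_tau_Suc_restart:
  "1 \<le> k \<Longrightarrow> cS \<le> ipt_S q X (ipt_tau q f0 cS cD X k) k \<Longrightarrow> \<not> ipt_stop q f0 cS cD X k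
   \<Longrightarrow> ipt_tau q f0 cS cD X (Suc k) = Suc k"
  unfolding ipt_stop_def by (auto simp: Let_def not_le)

lemma ipt_tau_Suc_below:
  "ipt_S q X (ipt_tau q f0 cS cD X k) k < cS \<Longrightarrow> ipt_tau q f0 cS cD X (Suc k) = ipt_tau q f0 cS cD X k"
  by (auto simp: Let_def)

lemma ipt_tau_const:
  assumes "k0 \<le> k" "\<And>k'. k0 \<le> k' \<Longrightarrow> k' < k \<Longrightarrow> ipt_S q X (ipt_tau q f0 cS cD X k') k' < cS"
  shows "ipt_tau q f0 cS cD X k = ipt_tau q f0 cS cD X k0"
  using assms
proof (induction k rule: dec_induct)
  case (step n)
  have "ipt_tau q f0 cS cD X n = ipt_tau q f0 cS cD X k0"
    using step by simp
  moreover have "ipt_S q X (ipt_tau q f0 cS cD X n) n < cS"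
    using step.prems[of n] step.hyps by simp
  ultimately show ?case
    using ipt_tau_Suc_below by metis
qed simp

lemma ipt_stop_if_window_small:
  assumes k: "1 \<le> k" and cS: "0 < cS" and S: "cS \<le> ipt_S q X (ipt_tau q f0 cS cD X k) k"
    and cD: "\<And>n. 1 \<le> n \<Longrightarrow> n \<le> N \<Longrightarrow> cD n \<le> 0"
    and window: "Suc k - ipt_tau q f0 cS cD X k \<le> N"
  shows "ipt_stop q f0 cS cD X k"
proof -
  let ?t = "ipt_tau q f0 cS cD X k"
  have i: "?t \<le> ipt_i q X ?t k" "ipt_i q X ?t k \<le> Suc k"
    using ipt_i_is_max[where tau="?t" and k=k and q=q and X=X] ipt_tau_le[of k q f0 cS cD X, OF k] by simp_all
  have "ipt_i q X ?t k \<noteq> Suc k"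
    using S cS unfolding ipt_S_def Qv_def by auto
  then have "1 \<le> ipt_n q X ?t k" "ipt_n q X ?t k \<le> N"
    using i window unfolding ipt_n_def by auto
  then have "ereal (cD (ipt_n q X ?t k)) \<le> 0"
    using cD by (simp add: zero_ereal_def)
  also have "0 \<le> ipt_D q f0 cS X ?t k"
    unfolding ipt_D_def by (rule KL_nonneg)
  finally show ?thesis
    unfolding ipt_stop_def using k S by (simp add: Let_def)
qed

text \<open>\<open>S\<^sub>k\<close> dominates every window statistic \<open>Q(s, k)\<close> with \<open>s \<ge> \<tau>\<^sub>k\<close>, and \<open>\<tau>\<close> does not move while \<open>S\<close> stays
  below \<open>c\<^sup>S\<close>.\<close>

lemma ipt_S_reaches_threshold:
  assumes k0: "1 \<le> k0" and s: "ipt_tau q f0 cS cD X k0 \<le> s" and "k0 \<le> e" "s \<le> Suc e"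
    and Q: "cS \<le> Qv q X s e"
  obtains r where "k0 \<le> r" "r \<le> e" "cS \<le> ipt_S q X (ipt_tau q f0 cS cD X r) r"
    "ipt_tau q f0 cS cD X r = ipt_tau q f0 cS cD X k0"
proof -
  let ?tau = "ipt_tau q f0 cS cD X"
  define P where "P r \<longleftrightarrow> k0 \<le> r \<and> cS \<le> ipt_S q X (?tau r) r" for r
  have "\<exists>r\<le>e. P r"
  proof (rule ccontr)
    assume none: "\<not> (\<exists>r\<le>e. P r)"
    then have "?tau e = ?tau k0"
      using \<open>k0 \<le> e\<close> by (intro ipt_tau_const) (use none in \<open>auto simp: P_def\<close>)
    then have "P e"
      using Qv_le_ipt_S[where q=q and X=X, OF s \<open>s \<le> Suc e\<close>] Q \<open>k0 \<le> e\<close> unfolding P_def by simp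
    with none show False by auto
  qed
  then obtain r where r: "P r" "r \<le> e" "\<And>r'. r' < r \<Longrightarrow> \<not> P r'"
    using exists_least_iff[of P] by (metis le_trans less_imp_le_nat not_le)
  have "ipt_S q X (?tau k') k' < cS" if "k0 \<le> k'" "k' < r" for k'
    using r(3)[OF that(2)] that(1) unfolding P_def by simp
  then have "?tau r = ?tau k0"
    using r(1) unfolding P_def by (intro ipt_tau_const) auto
  with r that show ?thesis
    unfolding P_def by blast
qed

section \<open>Empirical pmfs of consecutive windows\<close>

lemma count_mset_map_upt: "count (mset (map X [i..<j])) a = card {l\<in>{i..<j}. X l = a}"
proof (induction j)
  case (Suc j)
  show ?case
  proof (cases "i \<le> j")
    case True
    then have "{l\<in>{i..<Suc j}. X l = a} =
        (if X j = a then insert j {l\<in>{i..<j}. X l = a} else {l\<in>{i..<j}. X l = a})"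
      by (auto simp: less_Suc_eq)
    then show ?thesis
      using Suc True by simp
  qed simp
qed simp

lemma pmf_emp:
  assumes "i \<le> j"
  shows "pmf (emp X i j) a = real (card {l\<in>{i..<Suc j}. X l = a}) / real (Suc j - i)"
proof -
  have "mset (map X [i..<Suc j]) \<noteq> {#}"
    using assms by simp
  then show ?thesis
    unfolding emp_def
    by (simp only: pmf_of_multiset[OF \<open>_ \<noteq> {#}\<close>] count_mset_map_upt size_mset length_map length_upt)
qed

lemma emp_cong: "(\<And>l. i \<le> l \<Longrightarrow> l \<le> j \<Longrightarrow> X l = X' l) \<Longrightarrow> emp X i j = emp X' i j"
  unfolding emp_def by (intro arg_cong[where f=pmf_of_multiset] arg_cong[where f=mset] map_cong) auto

lemma pmf_emp_append:
  assumes "s \<le> m" "m < e"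
  defines "\<theta> \<equiv> real (Suc m - s) / real (Suc e - s)"
  shows "pmf (emp X s e) a = \<theta> * pmf (emp X s m) a + (1 - \<theta>) * pmf (emp X (Suc m) e) a"
proof -
  define C1 where "C1 = real (card {l\<in>{s..<Suc m}. X l = a})"
  define C2 where "C2 = real (card {l\<in>{Suc m..<Suc e}. X l = a})"
  define N1 where "N1 = real (Suc m - s)"
  define N2 where "N2 = real (Suc e - Suc m)"
  have "{l\<in>{s..<Suc e}. X l = a} = {l\<in>{s..<Suc m}. X l = a} \<union> {l\<in>{Suc m..<Suc e}. X l = a}"
    using assms by auto
  then have C: "real (card {l\<in>{s..<Suc e}. X l = a}) = C1 + C2"
    unfolding C1_def C2_def by (simp add: card_Un_disjoint disjoint_iff)
  have N: "real (Suc e - s) = N1 + N2" "0 < N1" "0 < N2"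
    using assms unfolding N1_def N2_def by auto
  have "pmf (emp X s e) a = (C1 + C2) / (N1 + N2)"
    using assms by (simp only: pmf_emp C N)
  also have "\<dots> = N1 / (N1 + N2) * (C1 / N1) + (1 - N1 / (N1 + N2)) * (C2 / N2)"
  proof -
    have "1 - N1 / (N1 + N2) = N2 / (N1 + N2)"
      using N by (simp add: field_simps)
    then show ?thesis
      using N by (simp add: add_divide_distrib)
  qed
  also have "\<dots> = \<theta> * pmf (emp X s m) a + (1 - \<theta>) * pmf (emp X (Suc m) e) a"
    unfolding \<theta>_def N(1) C1_def C2_def N1_def N2_def
    by (simp only: pmf_emp[OF assms(1)] pmf_emp[OF Suc_leI[OF assms(2)]])
  finally show ?thesis .
qed

lemma quasiconcave_emp_append:
  assumes qc: "quasiconcave_pmf q" and "s \<le> m" "m < e"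
  shows "min (q (emp X s m)) (q (emp X (Suc m) e)) \<le> q (emp X s e)"
proof -
  let ?\<theta> = "real (Suc m - s) / real (Suc e - s)"
  have "0 \<le> ?\<theta>" "?\<theta> \<le> 1"
    using assms by auto
  then show ?thesis
    using qc pmf_emp_append[OF \<open>s \<le> m\<close> \<open>m < e\<close>, of X] unfolding quasiconcave_pmf_def by blast
qed

definition good_blocks :: "('a pmf \<Rightarrow> real) \<Rightarrow> real \<Rightarrow> nat \<Rightarrow> nat \<Rightarrow> nat \<Rightarrow> (nat \<Rightarrow> 'a) \<Rightarrow> bool" where
  "good_blocks q c b a m X \<longleftrightarrow> (\<forall>l<m. c \<le> q (emp X (a + l*b) (a + l*b + b - 1)))"

lemma quasiconcave_emp_blocks:
  assumes qc: "quasiconcave_pmf q" and b: "1 \<le> b" and blocks: "good_blocks q c b s (Suc m) X"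
  shows "c \<le> q (emp X s (s + Suc m * b - 1))"
  using blocks
proof (induction m)
  case (Suc m)
  have "min (q (emp X s (s + Suc m * b - 1))) (q (emp X (s + Suc m * b) (s + Suc (Suc m) * b - 1)))
        \<le> q (emp X s (s + Suc (Suc m) * b - 1))"
    using quasiconcave_emp_append[OF qc, of s "s + Suc m * b - 1" "s + Suc (Suc m) * b - 1" X] b
    by simp
  moreover have "c \<le> q (emp X s (s + Suc m * b - 1))"
    using Suc unfolding good_blocks_def by simp
  moreover have "c \<le> q (emp X (s + Suc m * b) (s + Suc (Suc m) * b - 1))"
    using Suc.prems unfolding good_blocks_def by (auto simp: ac_simps)
  ultimately show ?case
    by linarith
qed (simp add: good_blocks_def)

lemma Qv_blocks_ge:
  assumes qc: "quasiconcave_pmf q" and "1 \<le> b" "1 \<le> m" "0 \<le> c" and blocks: "good_blocks q c b s m X"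
  shows "real (m * b) * c \<le> Qv q X s (s + m * b - 1)"
proof -
  obtain m' where m': "m = Suc m'"
    using \<open>1 \<le> m\<close> by (cases m) auto
  have "c \<le> q (emp X s (s + m * b - 1))"
    using quasiconcave_emp_blocks[OF qc \<open>1 \<le> b\<close>] blocks m' by blast
  moreover have "Suc (s + m * b - 1) - s = m * b"
    using assms m' by simp
  ultimately show ?thesis
    unfolding Qv_def by (simp add: mult_left_mono)
qed

section \<open>Stopping on a stretch of good blocks\<close>

lemma good_blocks_shift:
  assumes "good_blocks q c b a (l + m) X"
  shows "good_blocks q c b (a + l*b) m X"
  unfolding good_blocks_def
proof (intro allI impI)
  fix j assume "j < m"
  then have "c \<le> q (emp X (a + (l + j)*b) (a + (l + j)*b + b - 1))"
    using assms unfolding good_blocks_def by simp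
  moreover have "a + (l + j)*b = a + l*b + j*b"
    by (simp add: algebra_simps)
  ultimately show "c \<le> q (emp X (a + l*b + j*b) (a + l*b + j*b + b - 1))"
    by simp
qed

lemma good_blocks_mono: "good_blocks q c b a m X \<Longrightarrow> m' \<le> m \<Longrightarrow> good_blocks q c b a m' X"
  unfolding good_blocks_def by auto

lemma ipt_S_reaches_threshold_on_blocks:
  assumes qc: "quasiconcave_pmf q" and "1 \<le> b" "1 \<le> M" "0 \<le> c" and cover: "cS \<le> real (M*b) * c"
    and blocks: "good_blocks q c b s M X"
    and k0: "1 \<le> k0" "ipt_tau q f0 cS cD X k0 \<le> s" "k0 \<le> s + M*b - 1"
  obtains r where "k0 \<le> r" "r \<le> s + M*b - 1" "cS \<le> ipt_S q X (ipt_tau q f0 cS cD X r) r"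
    "ipt_tau q f0 cS cD X r = ipt_tau q f0 cS cD X k0"
proof -
  have "real (M*b) * c \<le> Qv q X s (s + M*b - 1)"
    by (rule Qv_blocks_ge[OF qc \<open>1 \<le> b\<close> \<open>1 \<le> M\<close> \<open>0 \<le> c\<close> blocks])
  with cover have "cS \<le> Qv q X s (s + M*b - 1)"
    by linarith
  moreover have "s \<le> Suc (s + M*b - 1)"
    by simp
  ultimately show ?thesis
    using ipt_S_reaches_threshold[OF k0] that by blast
qed

lemma ex_multiple_in_window:
  fixes b d :: nat
  assumes "0 < b"
  shows "\<exists>l. d \<le> l * b \<and> l * b < d + b"
proof -
  define l where "l = (d + (b - 1)) div b"
  have "l * b + (d + (b - 1)) mod b = d + (b - 1)"
    unfolding l_def by (rule div_mult_mod_eq)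
  moreover have "(d + (b - 1)) mod b < b"
    using assms by (rule mod_less_divisor)
  ultimately show ?thesis
    using assms by (intro exI[of _ l]) linarith
qed

lemma ipt_stops_on_good_blocks:
  assumes qc: "quasiconcave_pmf q" and b: "1 \<le> b" and M: "1 \<le> M" and c: "0 \<le> c"
    and cS: "0 < cS" and cover: "cS \<le> real (M*b) * c"
    and cD: "\<And>n. 1 \<le> n \<Longrightarrow> n \<le> M*b + b \<Longrightarrow> cD n \<le> 0"
    and a: "1 \<le> a" and blocks: "good_blocks q c b a (2*M) X"
  shows "\<exists>k. Suc k \<le> a + 2*M*b \<and> ipt_stop q f0 cS cD X k"
proof -
  let ?tau = "ipt_tau q f0 cS cD X"
  have Mb: "1 \<le> M*b" and epoch: "2*M*b = M*b + M*b"
    using b M by simp_all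
  have "good_blocks q c b a M X"
    using good_blocks_mono[OF blocks] by simp
  moreover have "a \<le> a + M*b - 1"
    using Mb by arith
  ultimately obtain r1 where r1: "a \<le> r1" "r1 \<le> a + M*b - 1" "cS \<le> ipt_S q X (?tau r1) r1"
    using ipt_S_reaches_threshold_on_blocks[OF qc b M c cover _ a ipt_tau_le[OF a]] by blast
  show ?thesis
  proof (cases "ipt_stop q f0 cS cD X r1")
    case True
    moreover have "Suc r1 \<le> a + 2*M*b"
      using r1(2) Mb epoch by linarith
    ultimately show ?thesis
      by blast
  next
    case False
    then have restart: "?tau (Suc r1) = Suc r1"
      using r1 a by (intro ipt_tau_Suc_restart) auto
    obtain l where l: "Suc r1 - a \<le> l*b" "l*b < Suc r1 - a + b"
      using ex_multiple_in_window[of b "Suc r1 - a"] b by auto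
    have "Suc r1 - a \<le> M*b"
      using r1(2) Mb by linarith
    then have "l*b < Suc M * b"
      using l(2) by simp
    then have "l \<le> M"
      by (simp only: mult_less_cancel2) simp
    then have "good_blocks q c b a (l + M) X"
      using good_blocks_mono[OF blocks] by simp
    then have "good_blocks q c b (a + l*b) M X"
      by (rule good_blocks_shift)
    moreover have "?tau (Suc r1) \<le> a + l*b" "Suc r1 \<le> a + l*b + M*b - 1"
      unfolding restart using l(1) r1(1) Mb by linarith+
    ultimately obtain r2 where r2: "Suc r1 \<le> r2" "r2 \<le> a + l*b + M*b - 1"
      "cS \<le> ipt_S q X (?tau r2) r2" "?tau r2 = Suc r1"
      using ipt_S_reaches_threshold_on_blocks[OF qc b M c cover, of "a + l*b" X "Suc r1"] restart
      by (metis le_add1 plus_1_eq_Suc)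
    have "Suc r2 - ?tau r2 \<le> M*b + b"
      unfolding r2(4) using r2(2) l(2) r1(1) by linarith
    then have "ipt_stop q f0 cS cD X r2"
      using r2(1) by (intro ipt_stop_if_window_small[OF _ cS r2(3) cD]) auto
    moreover have "Suc r2 \<le> a + 2*M*b"
    proof -
      have "l*b \<le> M*b"
        using \<open>l \<le> M\<close> by simp
      then show ?thesis
        using r2(2) Mb epoch by linarith
    qed
    ultimately show ?thesis
      by blast
  qed
qed

section \<open>The i.i.d. post-change sequence\<close>

abbreviation iid_seq :: "'a pmf \<Rightarrow> (nat \<Rightarrow> 'a) measure" where
  "iid_seq f \<equiv> PiM (UNIV :: nat set) (\<lambda>_. measure_pmf f)"

lemma prob_space_iid_seq: "prob_space (iid_seq f)"
  by (intro prob_space_PiM prob_space_measure_pmf)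

lemma space_iid_seq [simp]: "space (iid_seq f) = UNIV"
  by (simp add: space_PiM)

lemma measurable_iid_seq_coord [measurable]: "(\<lambda>Y. Y i) \<in> measurable (iid_seq f) (measure_pmf f)"
  by (rule measurable_component_singleton) simp

lemma distr_iid_seq_coord: "distr (iid_seq f) (measure_pmf f) (\<lambda>Y. Y i) = measure_pmf f"
  by (rule distr_PiM_component) (auto intro: prob_space_measure_pmf)

lemma indep_vars_iid_seq_coords:
  "prob_space.indep_vars (iid_seq f) (\<lambda>_. measure_pmf f) (\<lambda>i Y. Y i) UNIV"
proof -
  interpret prob_space "iid_seq f"
    by (rule prob_space_iid_seq)
  have "(\<lambda>Y. \<lambda>i\<in>UNIV. Y i) = (\<lambda>Y :: nat \<Rightarrow> 'a. Y)"
    by (simp add: restrict_def)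
  then show ?thesis
    by (subst indep_vars_iff_distr_eq_PiM) (simp_all add: distr_iid_seq_coord)
qed

lemma sets_PiM_finite_pmf:
  fixes f :: "'a::finite pmf"
  assumes K: "finite K" and B: "B \<subseteq> space (PiM K (\<lambda>_. measure_pmf f))"
  shows "B \<in> sets (PiM K (\<lambda>_. measure_pmf f))"
proof -
  have "B \<subseteq> PiE K (\<lambda>_. UNIV)"
    using B by (simp add: space_PiM)
  then have "finite B"
    by (rule finite_subset) (simp add: finite_PiE[OF K])
  moreover have "B = (\<Union>h\<in>B. PiE K (\<lambda>i. {h i}))"
  proof -
    have "PiE K (\<lambda>i. {h i}) = {h}" if "h \<in> B" for h
      using that B by (intro PiE_singleton) (auto simp: space_PiM PiE_def)
    then show ?thesis
      by auto
  qed
  ultimately show ?thesis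
    using K by (metis sets.finite_UN sets_PiM_I_finite sets_measure_pmf UNIV_I subset_UNIV)
qed

lemma sets_iid_seq_finite_dependence:
  fixes f :: "'a::finite pmf"
  assumes K: "finite K" and dep: "\<And>Y Y'. (\<And>i. i \<in> K \<Longrightarrow> Y i = Y' i) \<Longrightarrow> Y \<in> A \<Longrightarrow> Y' \<in> A"
  shows "A \<in> sets (iid_seq f)"
proof -
  let ?B = "(\<lambda>Y. restrict Y K) ` A"
  have "A = (\<lambda>Y. restrict Y K) -` ?B \<inter> space (iid_seq f)"
    using dep by (auto simp: restrict_def fun_eq_iff) (metis)
  also have "\<dots> \<in> sets (iid_seq f)"
    by (rule measurable_sets[OF measurable_restrict_subset sets_PiM_finite_pmf[OF K]])
      (auto simp: space_PiM)
  finally show ?thesis .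
qed

lemma prob_emp_deviation_le:
  fixes f :: "'a::finite pmf"
  assumes b: "1 \<le> b" and \<eta>: "0 \<le> \<eta>"
  shows "measure (iid_seq f) {Y. \<eta> \<le> \<bar>pmf (emp Y s (s + b - 1)) c - pmf f c\<bar>}
           \<le> 2 * exp (-2 * real b * \<eta>\<^sup>2)"
proof -
  interpret prob_space "iid_seq f"
    by (rule prob_space_iid_seq)
  define I where "I = {s..<s + b}"
  define Z :: "nat \<Rightarrow> (nat \<Rightarrow> 'a) \<Rightarrow> real" where "Z = (\<lambda>i Y. indicator {c} (Y i))"
  have distr_Z: "distr (iid_seq f) borel (Z i) = distr (measure_pmf f) borel (indicator {c})" for i
    using distr_distr[of "indicator {c} :: 'a \<Rightarrow> real" "measure_pmf f" borel "\<lambda>Y. Y i" "iid_seq f"]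
    by (simp add: distr_iid_seq_coord Z_def comp_def)
  interpret Hoeffding_ineq_iid "iid_seq f" I Z "Z s" 0 1 "expectation (Z s)"
  proof unfold_locales
    show "indep_vars (\<lambda>_. borel) Z I"
      unfolding Z_def
      by (rule indep_vars_subset[OF indep_vars_compose2[OF indep_vars_iid_seq_coords]]) simp_all
    show "distr (iid_seq f) borel (Z i) = distr (iid_seq f) borel (Z s)" for i
      by (simp only: distr_Z)
    show "random_variable borel (Z s)"
      unfolding Z_def by (rule measurable_compose[OF measurable_iid_seq_coord]) simp
    show "AE Y in iid_seq f. Z s Y \<in> {0..1}"
      unfolding Z_def by (simp add: indicator_def)
  qed (simp add: I_def)
  have "expectation (Z s) = pmf f c"
    using integral_distr[of "\<lambda>Y. Y s" "iid_seq f" "measure_pmf f" "indicator {c} :: 'a \<Rightarrow> real"]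
    by (simp add: distr_iid_seq_coord Z_def measure_pmf_single)
  moreover have "pmf (emp Y s (s + b - 1)) c = (\<Sum>i\<in>I. Z i Y) / real (card I)" for Y
  proof -
    have "(\<Sum>i\<in>I. Z i Y) = (\<Sum>i\<in>I. if Y i = c then 1 else 0)"
      unfolding Z_def by (intro sum.cong) (auto simp: indicator_def)
    also have "\<dots> = real (card {i\<in>I. Y i = c})"
      by (simp add: I_def sum.inter_filter[symmetric])
    finally show ?thesis
      using b by (simp add: pmf_emp I_def)
  qed
  ultimately have "{Y. \<eta> \<le> \<bar>pmf (emp Y s (s + b - 1)) c - pmf f c\<bar>} =
      {Y \<in> space (iid_seq f). \<eta> \<le> \<bar>(\<Sum>i\<in>I. Z i Y) / real (card I) - expectation (Z s)\<bar>}"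
    by simp
  also have "measure (iid_seq f) \<dots> \<le> 2 * exp (-2 * real (card I) * \<eta>\<^sup>2 / (1 - 0)\<^sup>2)"
    using b by (intro Hoeffding_ineq_abs_ge'[OF \<eta> zero_less_one]) (simp add: I_def)
  also have "\<dots> = 2 * exp (-2 * real b * \<eta>\<^sup>2)"
    by (simp add: I_def)
  finally show ?thesis .
qed

lemma good_blocks_cong:
  assumes b: "1 \<le> b" and eq: "\<And>i. a \<le> i \<Longrightarrow> i < a + m*b \<Longrightarrow> Y i = Y' i"
  shows "good_blocks q c b a m Y = good_blocks q c b a m Y'"
proof -
  have "emp Y (a + l*b) (a + l*b + b - 1) = emp Y' (a + l*b) (a + l*b + b - 1)" if "l < m" for l
  proof (rule emp_cong)
    fix i assume "a + l*b \<le> i" "i \<le> a + l*b + b - 1"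
    moreover have "Suc l * b \<le> m * b"
      using that by (intro mult_le_mono1) simp
    ultimately show "Y i = Y' i"
      using b by (intro eq) auto
  qed
  then show ?thesis
    unfolding good_blocks_def by auto
qed

lemma sets_not_good_blocks:
  fixes f :: "'a::finite pmf"
  assumes "1 \<le> b"
  shows "{Y. \<not> good_blocks q c b a m Y} \<in> sets (iid_seq f)"
proof (rule sets_iid_seq_finite_dependence[of "{a..<a + m*b}"])
  fix Y Y' :: "nat \<Rightarrow> 'a"
  assume "\<And>i. i \<in> {a..<a + m*b} \<Longrightarrow> Y i = Y' i" "Y \<in> {Y. \<not> good_blocks q c b a m Y}"
  then show "Y' \<in> {Y. \<not> good_blocks q c b a m Y}"
    using good_blocks_cong[OF assms, of a m Y Y' q c] by auto
qed simp

text \<open>A block is bad only if some letter frequency is \<open>\<eta>\<close>-far from its mean, so a union bound over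
  blocks and letters combined with Hoeffding's inequality bounds the probability of a bad stretch.\<close>

lemma prob_not_good_blocks_le:
  fixes f :: "'a::finite pmf"
  assumes b: "1 \<le> b" and \<eta>: "0 \<le> \<eta>"
    and close: "\<And>g. (\<And>x. \<bar>pmf g x - pmf f x\<bar> < \<eta>) \<Longrightarrow> c \<le> q g"
  shows "measure (iid_seq f) {Y. \<not> good_blocks q c b a m Y}
           \<le> real m * real CARD('a) * (2 * exp (-2 * real b * \<eta>\<^sup>2))"
proof -
  interpret prob_space "iid_seq f"
    by (rule prob_space_iid_seq)
  define H where "H = (\<lambda>(l, x). {Y. \<eta> \<le> \<bar>pmf (emp Y (a + l*b) (a + l*b + b - 1)) x - pmf f x\<bar>})"
  have H_sets: "H lx \<in> sets (iid_seq f)" for lx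
    unfolding H_def case_prod_beta
    by (rule sets_iid_seq_finite_dependence[of "{a + fst lx * b..<a + fst lx * b + b}"])
      (use b in \<open>auto cong: emp_cong\<close>)
  have "{Y. \<not> good_blocks q c b a m Y} \<subseteq> (\<Union>lx\<in>{..<m} \<times> UNIV. H lx)"
  proof
    fix Y assume "Y \<in> {Y. \<not> good_blocks q c b a m Y}"
    then obtain l where l: "l < m" "\<not> c \<le> q (emp Y (a + l*b) (a + l*b + b - 1))"
      unfolding good_blocks_def by auto
    then obtain x where "\<not> \<bar>pmf (emp Y (a + l*b) (a + l*b + b - 1)) x - pmf f x\<bar> < \<eta>"
      using close by blast
    then show "Y \<in> (\<Union>lx\<in>{..<m} \<times> UNIV. H lx)"
      using l unfolding H_def by (auto simp: not_less intro!: bexI[of _ "(l, x)"])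
  qed
  then have "measure (iid_seq f) {Y. \<not> good_blocks q c b a m Y} \<le> measure (iid_seq f) (\<Union>lx\<in>{..<m} \<times> UNIV. H lx)"
    using H_sets by (intro finite_measure_mono) auto
  also have "\<dots> \<le> (\<Sum>lx\<in>{..<m} \<times> UNIV. measure (iid_seq f) (H lx))"
    using H_sets by (intro finite_measure_subadditive_finite) auto
  also have "\<dots> \<le> (\<Sum>lx\<in>{..<m} \<times> (UNIV :: 'a set). 2 * exp (-2 * real b * \<eta>\<^sup>2))"
    unfolding H_def case_prod_beta by (intro sum_mono prob_emp_deviation_le b \<eta>)
  also have "\<dots> = real m * real CARD('a) * (2 * exp (-2 * real b * \<eta>\<^sup>2))"
    by (simp add: card_cartesian_product)
  finally show ?thesis .
qed

text \<open>Disjoint stretches depend on disjoint sets of coordinates, hence are independent.\<close>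

lemma prob_all_not_good_blocks:
  fixes f :: "'a::finite pmf"
  assumes b: "1 \<le> b"
  shows "measure (iid_seq f) {Y. \<forall>j<n. \<not> good_blocks q c b (t + j*(m*b)) m Y}
       = (\<Prod>j<n. measure (iid_seq f) {Y. \<not> good_blocks q c b (t + j*(m*b)) m Y})"
proof (cases "n = 0")
  case True
  then show ?thesis
    using prob_space.prob_space[OF prob_space_iid_seq] by simp
next
  case False
  interpret prob_space "iid_seq f"
    by (rule prob_space_iid_seq)
  define E where "E = m*b"
  define K where "K j = {t + j*E..<t + j*E + E}" for j
  have "disjoint_family K"
    unfolding disjoint_family_on_def
  proof (intro ballI impI)
    fix i j :: nat assume "i \<noteq> j"
    then consider "Suc i * E \<le> j * E" | "Suc j * E \<le> i * E"
      by (metis linorder_neqE_nat Suc_leI mult_le_mono1)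
    then show "K i \<inter> K j = {}"
      by cases (auto simp: K_def)
  qed
  then have indep: "indep_vars (\<lambda>j. PiM (K j) (\<lambda>_. measure_pmf f)) (\<lambda>j Y. restrict Y (K j)) UNIV"
    using indep_vars_restrict[OF indep_vars_iid_seq_coords, of UNIV K] by simp
  define B where "B j = {h \<in> space (PiM (K j) (\<lambda>_. measure_pmf f)). \<not> good_blocks q c b (t + j*E) m h}" for j
  have B_sets: "B j \<in> sets (PiM (K j) (\<lambda>_. measure_pmf f))" for j
    unfolding B_def by (rule sets_PiM_finite_pmf) (auto simp: K_def)
  have preimage: "(\<lambda>Y. restrict Y (K j)) -` B j \<inter> space (iid_seq f) = {Y. \<not> good_blocks q c b (t + j*E) m Y}" for j
  proof -
    have "good_blocks q c b (t + j*E) m (restrict Y (K j)) = good_blocks q c b (t + j*E) m Y" for Y :: "nat \<Rightarrow> 'a"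
      by (rule good_blocks_cong[OF b]) (auto simp: K_def E_def)
    then show ?thesis
      unfolding B_def by (auto simp: space_PiM K_def)
  qed
  have "{Y. \<forall>j<n. \<not> good_blocks q c b (t + j*E) m Y} = (\<Inter>j\<in>{..<n}. (\<lambda>Y. restrict Y (K j)) -` B j \<inter> space (iid_seq f))"
    unfolding preimage using False by auto
  also have "prob \<dots> = (\<Prod>j<n. prob ((\<lambda>Y. restrict Y (K j)) -` B j \<inter> space (iid_seq f)))"
    by (rule indep_varsD[OF indep]) (use False B_sets in auto)
  finally show ?thesis
    unfolding preimage E_def .
qed

section \<open>Expected detection delay\<close>

lemma nn_integral_sum_indicator_le_geometric:
  assumes M: "prob_space M" and A: "\<And>n. A n \<in> sets M"
    and p: "\<And>n. measure M (A n) \<le> p^n" "0 \<le> p" "p < 1"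
  shows "(\<integral>\<^sup>+x. (\<Sum>n. of_nat E * indicator (A n) x) \<partial>M) \<le> ennreal (real E / (1 - p))"
proof -
  interpret prob_space M
    by (rule M)
  have "(\<integral>\<^sup>+x. (\<Sum>n. of_nat E * indicator (A n) x) \<partial>M) = (\<Sum>n. \<integral>\<^sup>+x. of_nat E * indicator (A n) x \<partial>M)"
    using A by (intro nn_integral_suminf) simp
  also have "\<dots> = (\<Sum>n. of_nat E * emeasure M (A n))"
    using A by (simp add: nn_integral_cmult_indicator)
  also have "\<dots> \<le> (\<Sum>n. ennreal (real E * p^n))"
  proof (intro suminf_le summableI)
    fix n
    have "of_nat E * emeasure M (A n) \<le> of_nat E * ennreal (p^n)"
      using p(1)[of n] by (intro mult_left_mono) (simp_all add: emeasure_eq_measure ennreal_leI)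
    then show "of_nat E * emeasure M (A n) \<le> ennreal (real E * p^n)"
      using p(2) by (simp add: ennreal_mult ennreal_of_nat_eq_real_of_nat)
  qed
  also have "\<dots> = ennreal (\<Sum>n. real E * p^n)"
    using p by (intro suminf_ennreal2) (auto intro: summable_mult summable_geometric)
  also have "(\<Sum>n. real E * p^n) = real E / (1 - p)"
    using p by (simp add: suminf_mult summable_geometric suminf_geometric)
  finally show ?thesis .
qed

text \<open>The sum is the total length of the epochs of \<open>2M\<close> blocks up to and including the first good one.\<close>

lemma delay_le_sum_bad_epochs:
  fixes x Y :: "nat \<Rightarrow> 'a::finite" and cD :: "nat \<Rightarrow> real"
  assumes qc: "quasiconcave_pmf q" and b: "1 \<le> b" and M: "1 \<le> M" and c: "0 \<le> c"
    and cS: "0 < cS" and cover: "cS \<le> real (M*b) * c"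
    and cD: "\<And>n. 1 \<le> n \<Longrightarrow> n \<le> M*b + b \<Longrightarrow> cD n \<le> 0"
    and t1: "1 \<le> t1"
  defines "E \<equiv> 2*M*b"
  shows "delay (tI q f0 cS cD (\<lambda>l. if l < t1 then x l else Y l)) t1
           \<le> (\<Sum>n. of_nat E * indicator {Y. \<forall>j<n. \<not> good_blocks q c b (t1 + j*E) (2*M) Y} Y)"
    (is "_ \<le> (\<Sum>n. of_nat E * indicator (?A n) Y)")
proof (cases "\<exists>j. good_blocks q c b (t1 + j*E) (2*M) Y")
  case True
  define J where "J = (LEAST j. good_blocks q c b (t1 + j*E) (2*M) Y)"
  define X where "X = (\<lambda>l. if l < t1 then x l else Y l)"
  have "good_blocks q c b (t1 + J*E) (2*M) Y"
    unfolding J_def using True by (rule LeastI_ex)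
  then have "good_blocks q c b (t1 + J*E) (2*M) X"
    using good_blocks_cong[OF b, of "t1 + J*E" "2*M" X Y] by (simp add: X_def)
  moreover have "1 \<le> t1 + J*E"
    using t1 by simp
  ultimately obtain k where k: "Suc k \<le> t1 + J*E + 2*M*b" "ipt_stop q f0 cS cD X k"
    using ipt_stops_on_good_blocks[where cD=cD, OF qc b M c cS cover cD] by blast
  define m where "m = (LEAST k. ipt_stop q f0 cS cD X k)"
  have "m \<le> k"
    unfolding m_def using k(2) by (rule Least_le)
  have "delay (tI q f0 cS cD X) t1 = of_nat (Suc m - t1)"
    unfolding tI_def delay_def m_def using k(2) by auto
  also have "\<dots> \<le> of_nat (Suc J * E)"
  proof (rule of_nat_mono)
    show "Suc m - t1 \<le> Suc J * E"
      using \<open>m \<le> k\<close> k(1) unfolding E_def by simp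
  qed
  also have "\<dots> = (\<Sum>n<Suc J. of_nat E * indicator (?A n) Y)"
    using not_less_Least[of _ "\<lambda>j. good_blocks q c b (t1 + j*E) (2*M) Y"]
    by (simp add: indicator_def J_def[symmetric] less_Suc_eq_le order.strict_trans2 distrib_right)
  also have "\<dots> \<le> (\<Sum>n. of_nat E * indicator (?A n) Y)"
    by (rule sum_le_suminf) auto
  finally show ?thesis
    unfolding X_def .
next
  case False
  have "1 \<le> E"
    using b M by (simp add: E_def)
  have "(\<Sum>n. of_nat E * indicator (?A n) Y) = (\<Sum>n::nat. ennreal (real E))"
    using False by (simp add: ennreal_of_nat_eq_real_of_nat)
  also have "\<dots> = top"
    using \<open>1 \<le> E\<close> by (intro summable_iff_suminf_neq_top) (auto simp: summable_const_iff)
  finally show ?thesis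
    by simp
qed

lemma expected_delay_le:
  fixes f :: "'a::finite pmf" and x :: "nat \<Rightarrow> 'a" and cD :: "nat \<Rightarrow> real"
  assumes qc: "quasiconcave_pmf q" and b: "1 \<le> b" and M: "1 \<le> M" and c: "0 \<le> c"
    and cS: "0 < cS" and cover: "cS \<le> real (M*b) * c"
    and cD: "\<And>n. 1 \<le> n \<Longrightarrow> n \<le> M*b + b \<Longrightarrow> cD n \<le> 0"
    and t1: "1 \<le> t1"
    and bad: "\<And>a. measure (iid_seq f) {Y. \<not> good_blocks q c b a (2*M) Y} \<le> p" and "p < 1"
  shows "(\<integral>\<^sup>+Y. delay (tI q f0 cS cD (\<lambda>l. if l < t1 then x l else Y l)) t1 \<partial>iid_seq f)
           \<le> ennreal (real (2*M*b) / (1 - p))"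
proof -
  define E where "E = 2*M*b"
  define A where "A n = {Y. \<forall>j<n. \<not> good_blocks q c b (t1 + j*E) (2*M) Y}" for n
  have "0 \<le> p"
    using bad[of 0] measure_nonneg order_trans by blast
  have A_sets: "A n \<in> sets (iid_seq f)" for n
  proof -
    have "{Y \<in> space (iid_seq f). \<forall>j\<in>{..<n}. \<not> good_blocks q c b (t1 + j*E) (2*M) Y} \<in> sets (iid_seq f)"
      using sets_not_good_blocks[OF b] by (intro sets.sets_Collect_countable_All') simp_all
    then show ?thesis
      unfolding A_def by (simp add: Ball_def lessThan_iff)
  qed
  have "measure (iid_seq f) (A n) \<le> p^n" for n
  proof -
    have "measure (iid_seq f) (A n) = (\<Prod>j<n. measure (iid_seq f) {Y. \<not> good_blocks q c b (t1 + j*E) (2*M) Y})"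
      unfolding A_def E_def by (rule prob_all_not_good_blocks[OF b])
    also have "\<dots> \<le> (\<Prod>j<n. p)"
      using bad by (intro prod_mono) simp
    finally show ?thesis
      by simp
  qed
  then have geometric: "(\<integral>\<^sup>+Y. (\<Sum>n. of_nat E * indicator (A n) Y) \<partial>iid_seq f) \<le> ennreal (real E / (1 - p))"
    using A_sets \<open>0 \<le> p\<close> \<open>p < 1\<close> by (intro nn_integral_sum_indicator_le_geometric prob_space_iid_seq)
  have "(\<integral>\<^sup>+Y. delay (tI q f0 cS cD (\<lambda>l. if l < t1 then x l else Y l)) t1 \<partial>iid_seq f)
      \<le> (\<integral>\<^sup>+Y. (\<Sum>n. of_nat E * indicator (A n) Y) \<partial>iid_seq f)"
    unfolding A_def E_def by (intro nn_integral_mono delay_le_sum_bad_epochs[OF qc b M c cS cover cD t1])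
  then show ?thesis
    using geometric unfolding E_def by (rule order_trans)
qed

section \<open>Asymptotics as \<open>c\<^sup>S \<rightarrow> \<infinity>\<close>\<close>

lemma lipschitz_l1_pmf_pos:
  assumes "lipschitz_l1_pmf L q" "q f \<noteq> q g"
  shows "0 < L"
proof (rule ccontr)
  assume "\<not> 0 < L"
  moreover have "\<bar>q f - q g\<bar> \<le> L * (\<Sum>a\<in>UNIV. \<bar>pmf f a - pmf g a\<bar>)"
    using assms(1) unfolding lipschitz_l1_pmf_def by blast
  moreover have "0 \<le> (\<Sum>a\<in>UNIV. \<bar>pmf f a - pmf g a\<bar>)"
    by (simp add: sum_nonneg)
  ultimately have "\<bar>q f - q g\<bar> \<le> 0"
    by (smt (verit) mult_nonpos_nonneg)
  with assms(2) show False
    by simp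
qed

lemma lipschitz_l1_pmf_close:
  fixes f g :: "'a::finite pmf"
  assumes lip: "lipschitz_l1_pmf L q" and L: "0 < L"
    and close: "\<And>x. \<bar>pmf g x - pmf f x\<bar> < \<gamma> / (L * real CARD('a))"
  shows "q f - \<gamma> < q g"
proof -
  have "(\<Sum>x\<in>UNIV. \<bar>pmf g x - pmf f x\<bar>) < (\<Sum>x\<in>(UNIV :: 'a set). \<gamma> / (L * real CARD('a)))"
    using close by (intro sum_strict_mono) auto
  then have "L * (\<Sum>x\<in>UNIV. \<bar>pmf g x - pmf f x\<bar>) < \<gamma>"
    using L by (simp add: field_simps)
  moreover have "\<bar>q g - q f\<bar> \<le> L * (\<Sum>x\<in>UNIV. \<bar>pmf g x - pmf f x\<bar>)"
    using lip unfolding lipschitz_l1_pmf_def by blast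
  ultimately show ?thesis
    by linarith
qed

lemma WADD_tI_le:
  fixes f0 :: "'a::finite pmf" and cD :: "nat \<Rightarrow> real" and M b :: nat and \<eta> :: real
  defines "p \<equiv> real (2*M) * real CARD('a) * (2 * exp (-2 * real b * \<eta>\<^sup>2))"
  assumes qc: "quasiconcave_pmf q" and b: "1 \<le> b" and M: "1 \<le> M" and c: "0 \<le> c"
    and cS: "0 < cS" and cover: "cS \<le> real (M*b) * c"
    and cD: "\<And>n. 1 \<le> n \<Longrightarrow> n \<le> M*b + b \<Longrightarrow> cD n \<le> 0"
    and \<eta>: "0 \<le> \<eta>" and close: "\<And>f g. f \<in> P1 \<Longrightarrow> (\<And>x. \<bar>pmf g x - pmf f x\<bar> < \<eta>) \<Longrightarrow> c \<le> q g"
    and "p < 1"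
  shows "WADD f0 P1 (tI q f0 cS cD) \<le> ennreal (real (2*M*b) / (1 - p))"
  unfolding WADD_def
proof (intro SUP_least, clarify)
  fix f :: "'a pmf" and t1 :: nat and x :: "nat \<Rightarrow> 'a"
  assume "f \<in> P1" "1 \<le> t1"
  show "(\<integral>\<^sup>+Y. delay (tI q f0 cS cD (\<lambda>l. if l < t1 then x l else Y l)) t1 \<partial>iid_seq f)
          \<le> ennreal (real (2*M*b) / (1 - p))"
  proof (rule expected_delay_le[OF qc b M c cS cover cD \<open>1 \<le> t1\<close> _ \<open>p < 1\<close>])
    fix a
    have "c \<le> q g" if "\<And>x. \<bar>pmf g x - pmf f x\<bar> < \<eta>" for g
      using close[OF \<open>f \<in> P1\<close> that] .
    then show "measure (iid_seq f) {Y. \<not> good_blocks q c b a (2*M) Y} \<le> p"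
      unfolding p_def by (rule prob_not_good_blocks_le[OF b \<eta>])
  qed
qed

lemma block_parameters:
  fixes qlow \<delta> cS :: real
  assumes ql: "0 < qlow" and \<delta>: "0 < \<delta>" and cS: "0 < cS" and large: "2 \<le> \<delta> * cS / qlow"
  obtains b M :: nat where "1 \<le> b" "1 \<le> M" "cS \<le> real (M*b) * (qlow / (1 + \<delta>))"
    "real (M*b + b) \<le> (1 + 3*\<delta>) * cS / qlow" "real (2*M*b) \<le> 2 * (1 + 2*\<delta>) * cS / qlow"
    "real M \<le> 2 * (1 + \<delta>) / \<delta> + 1" "\<delta> * cS / (2 * qlow) \<le> real b"
proof -
  define qq where "qq = qlow / (1 + \<delta>)"
  define y where "y = \<delta> * cS / qlow"
  define b where "b = nat \<lfloor>y\<rfloor>"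
  define z where "z = cS / (real b * qq)"
  define M where "M = nat \<lceil>z\<rceil>"
  have qq: "0 < qq" "cS / qq = (1 + \<delta>) * cS / qlow"
    unfolding qq_def using ql \<delta> by (simp_all add: field_simps)
  have "2 \<le> \<lfloor>y\<rfloor>"
    using large unfolding y_def by linarith
  then have "real b = of_int \<lfloor>y\<rfloor>"
    unfolding b_def by simp
  then have b: "real b \<le> y" "y - 1 < real b" "2 \<le> real b"
    using \<open>2 \<le> \<lfloor>y\<rfloor>\<close> by linarith+
  have z: "0 < z"
    unfolding z_def using cS b qq by simp
  have M: "z \<le> real M" "real M < z + 1"
    unfolding M_def using z by linarith+
  have Mb: "real M * real b \<le> cS / qq + real b"
  proof -
    have "real M * real b \<le> (z + 1) * real b"
      using M b by (intro mult_right_mono) auto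
    also have "\<dots> = cS / qq + real b"
      unfolding z_def using b qq by (simp add: field_simps)
    finally show ?thesis .
  qed
  have b_half: "\<delta> * cS / (2 * qlow) \<le> real b"
    using b large unfolding y_def by (simp add: field_simps)
  show ?thesis
  proof
    show "1 \<le> b" "1 \<le> M"
      using b M z by simp_all
    have "cS = z * (real b * qq)"
      unfolding z_def using b qq by simp
    also have "\<dots> \<le> real M * (real b * qq)"
      using M b qq by (intro mult_right_mono) auto
    finally show "cS \<le> real (M*b) * (qlow / (1 + \<delta>))"
      by (simp add: qq_def mult.assoc)
    have MbS: "real M * real b \<le> (1 + \<delta>) * cS / qlow + \<delta> * cS / qlow"
      using Mb b(1) qq(2) unfolding y_def by linarith
    have "real (M*b + b) \<le> (1 + \<delta>) * cS / qlow + 2 * (\<delta> * cS / qlow)"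
      using MbS b(1) unfolding y_def by simp
    also have "\<dots> = (1 + 3*\<delta>) * cS / qlow"
      using ql by (simp add: field_simps)
    finally show "real (M*b + b) \<le> (1 + 3*\<delta>) * cS / qlow" .
    have "real (2*M*b) \<le> 2 * ((1 + \<delta>) * cS / qlow + \<delta> * cS / qlow)"
      using MbS by simp
    also have "\<dots> = 2 * (1 + 2*\<delta>) * cS / qlow"
      using ql by (simp add: field_simps)
    finally show "real (2*M*b) \<le> 2 * (1 + 2*\<delta>) * cS / qlow" .
    have "z \<le> cS / ((\<delta> * cS / (2 * qlow)) * qq)"
      unfolding z_def using b_half b(3) qq cS \<delta> ql by (intro divide_left_mono mult_right_mono mult_pos_pos) auto
    also have "\<dots> = 2 * (1 + \<delta>) / \<delta>"
      unfolding qq_def using cS \<delta> ql by (simp add: field_simps)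
    finally show "real M \<le> 2 * (1 + \<delta>) / \<delta> + 1"
      using M by linarith
    show "\<delta> * cS / (2 * qlow) \<le> real b"
      by (rule b_half)
  qed
qed

lemma divide_one_minus_le:
  fixes X p \<delta> y :: real
  assumes "0 \<le> X" "X \<le> 2 * (1 + 2*\<delta>) * y" "0 \<le> p" "p \<le> \<delta>" "\<delta> \<le> 1/2"
  shows "X / (1 - p) \<le> 2 * (1 + 6*\<delta>) * y"
proof -
  have "0 \<le> 2 * (1 + 2*\<delta>) * y" "0 < 2 * (1 + 2*\<delta>)"
    using assms by (linarith, simp add: ring_distribs)
  then have "0 \<le> y"
    by (simp add: zero_le_mult_iff)
  have "X / (1 - p) \<le> X / (1 - \<delta>)"
    using assms by (intro divide_left_mono) auto
  also have "\<dots> \<le> 2 * (1 + 2*\<delta>) * y / (1 - \<delta>)"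
    using assms by (intro divide_right_mono) auto
  also have "\<dots> \<le> 2 * (1 + 6*\<delta>) * y"
  proof -
    have "\<delta> * (2 * \<delta>) \<le> \<delta> * 1"
      using assms by (intro mult_left_mono) auto
    then have "1 + 2*\<delta> \<le> (1 + 6*\<delta>) * (1 - \<delta>)"
      by (simp add: algebra_simps)
    then have "(1 + 2*\<delta>) * (2 * y) \<le> ((1 + 6*\<delta>) * (1 - \<delta>)) * (2 * y)"
      using \<open>0 \<le> y\<close> by (intro mult_right_mono) auto
    then have "2 * (1 + 2*\<delta>) * y \<le> 2 * (1 + 6*\<delta>) * y * (1 - \<delta>)"
      by (simp add: algebra_simps)
    then show ?thesis
      using assms by (simp add: pos_divide_le_eq)
  qed
  finally show ?thesis .
qed

lemma epoch_failure_bound_le: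
  fixes qlow \<delta> \<eta> cS d Mx :: real and b M :: nat
  assumes \<delta>: "0 < \<delta>" and \<eta>: "0 < \<eta>" and ql: "0 < qlow" and d: "0 < d" and Mx: "0 < Mx"
    and b: "\<delta> * cS / (2 * qlow) \<le> real b" and M: "real M \<le> Mx"
    and large: "- ln (\<delta> / (4 * Mx * d)) / (\<delta> * \<eta>\<^sup>2 / qlow) \<le> cS"
  shows "real (2*M) * d * (2 * exp (-2 * real b * \<eta>\<^sup>2)) \<le> \<delta>"
proof -
  define \<kappa> where "\<kappa> = \<delta> * \<eta>\<^sup>2 / qlow"
  define c0 where "c0 = \<delta> / (4 * Mx * d)"
  have "0 < \<kappa>" "0 < c0"
    unfolding \<kappa>_def c0_def using \<delta> \<eta> ql d Mx by simp_all
  have "- ln c0 / \<kappa> \<le> cS"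
    using large unfolding \<kappa>_def[symmetric] c0_def[symmetric] .
  then have "- ln c0 \<le> \<kappa> * cS"
    by (simp only: pos_divide_le_eq[OF \<open>0 < \<kappa>\<close>] mult.commute)
  also have "\<kappa> * cS = 2 * (\<delta> * cS / (2 * qlow)) * \<eta>\<^sup>2"
    unfolding \<kappa>_def using ql by (simp add: field_simps)
  also have "\<dots> \<le> 2 * real b * \<eta>\<^sup>2"
    using b by (intro mult_right_mono) auto
  finally have "exp (-2 * real b * \<eta>\<^sup>2) \<le> exp (ln c0)"
    by simp
  then have "exp (-2 * real b * \<eta>\<^sup>2) \<le> c0"
    using \<open>0 < c0\<close> by simp
  then have "real (2*M) * d * (2 * exp (-2 * real b * \<eta>\<^sup>2)) \<le> 4 * Mx * d * c0"
    using M d by (simp add: mult_mono mult_left_mono mult.commute mult.left_commute)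
  also have "\<dots> = \<delta>"
    unfolding c0_def using d Mx by simp
  finally show ?thesis .
qed

lemma WADD_tI_div_le:
  fixes f0 :: "'a::finite pmf" and cD :: "nat \<Rightarrow> real" and \<delta> :: real
  defines "Mx \<equiv> 2 * (1 + \<delta>) / \<delta> + 1"
  assumes qc: "quasiconcave_pmf q" and ql: "0 < qlow" and \<delta>: "0 < \<delta>" "\<delta> \<le> 1/2" and \<eta>: "0 < \<eta>"
    and close: "\<And>f g. f \<in> P1 \<Longrightarrow> (\<And>x. \<bar>pmf g x - pmf f x\<bar> < \<eta>) \<Longrightarrow> qlow / (1 + \<delta>) \<le> q g"
    and cD: "\<And>n. 1 \<le> n \<Longrightarrow> real n \<le> (1 + 3*\<delta>) * cS / qlow \<Longrightarrow> cD n \<le> 0"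
    and cS: "0 < cS" "2 * qlow / \<delta> \<le> cS"
    and large: "- ln (\<delta> / (4 * Mx * real CARD('a))) / (\<delta> * \<eta>\<^sup>2 / qlow) \<le> cS"
  shows "WADD f0 P1 (tI q f0 cS cD) / ennreal cS \<le> ennreal (2 * (1 + 6*\<delta>) / qlow)"
proof -
  have "2 \<le> \<delta> * cS / qlow"
    using cS ql \<delta> by (simp add: field_simps)
  then obtain b M :: nat where b: "1 \<le> b" "\<delta> * cS / (2 * qlow) \<le> real b"
    and M: "1 \<le> M" "real M \<le> Mx" and cover: "cS \<le> real (M*b) * (qlow / (1 + \<delta>))"
    and window: "real (M*b + b) \<le> (1 + 3*\<delta>) * cS / qlow"
    and epoch: "real (2*M*b) \<le> 2 * (1 + 2*\<delta>) * cS / qlow"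
    using block_parameters[OF ql \<delta>(1) cS(1)] unfolding Mx_def by metis
  define p where "p = real (2*M) * real CARD('a) * (2 * exp (-2 * real b * \<eta>\<^sup>2))"
  have "0 < Mx"
    unfolding Mx_def using \<delta> by (simp add: add_pos_pos)
  then have "p \<le> \<delta>"
    unfolding p_def using epoch_failure_bound_le[OF \<delta>(1) \<eta> ql _ _ b(2) M(2) large] by simp
  have "WADD f0 P1 (tI q f0 cS cD) \<le> ennreal (real (2*M*b) / (1 - p))"
    unfolding p_def
  proof (rule WADD_tI_le[OF qc b(1) M(1) _ cS(1) cover])
    show "cD n \<le> 0" if "1 \<le> n" "n \<le> M*b + b" for n
    proof (rule cD[OF \<open>1 \<le> n\<close>])
      have "real n \<le> real (M*b + b)"
        using that(2) by (simp only: of_nat_le_iff)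
      with window show "real n \<le> (1 + 3*\<delta>) * cS / qlow"
        by linarith
    qed
  qed (use ql \<delta> \<eta> close \<open>p \<le> \<delta>\<close> in \<open>auto simp: p_def\<close>)
  also have "\<dots> \<le> ennreal (2 * (1 + 6*\<delta>) * (cS / qlow))"
    using epoch \<open>p \<le> \<delta>\<close> \<delta> by (intro ennreal_leI divide_one_minus_le) (auto simp: p_def)
  finally have "WADD f0 P1 (tI q f0 cS cD) / ennreal cS \<le> ennreal (2 * (1 + 6*\<delta>) * (cS / qlow)) / ennreal cS"
    by (rule divide_right_mono_ennreal)
  also have "\<dots> = ennreal (2 * (1 + 6*\<delta>) / qlow)"
    using cS ql \<delta> by (subst divide_ennreal) auto
  finally show ?thesis .
qed

lemma Limsup_WADD_tI_le:
  fixes f0 :: "'a::finite pmf" and cD :: "real \<Rightarrow> nat \<Rightarrow> real"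
  assumes qc: "quasiconcave_pmf q" and lip: "lipschitz_l1_pmf L q" and L: "0 < L"
    and ql: "0 < qlow" and P1: "P1 \<subseteq> {f. qlow \<le> q f}" and \<delta>: "0 < \<delta>" "\<delta> \<le> 1/2" "\<delta> \<le> \<rho>/3"
    and cD_zero: "\<And>cS n. 0 < cS \<Longrightarrow> 1 \<le> n \<Longrightarrow> real n \<le> (1 + \<rho>) * cS / qlow \<Longrightarrow> cD cS n = 0"
  shows "Limsup at_top (\<lambda>cS::real. WADD f0 P1 (tI q f0 cS (cD cS)) / ennreal cS)
           \<le> ennreal (2 * (1 + 6*\<delta>) / qlow)"
proof (rule Limsup_bounded)
  define \<eta> where "\<eta> = (qlow - qlow / (1 + \<delta>)) / (L * real CARD('a))"
  have "qlow / (1 + \<delta>) < qlow"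
    using ql \<delta> by (simp add: field_simps)
  then have "0 < \<eta>"
    unfolding \<eta>_def using L by simp
  have close: "qlow / (1 + \<delta>) \<le> q g" if "f \<in> P1" "\<And>x. \<bar>pmf g x - pmf f x\<bar> < \<eta>" for f g
    using lipschitz_l1_pmf_close[OF lip L, of g f "qlow - qlow / (1 + \<delta>)"] that P1
    unfolding \<eta>_def by fastforce
  have cD: "cD cS n \<le> 0" if "0 < cS" "1 \<le> n" "real n \<le> (1 + 3*\<delta>) * cS / qlow" for cS n
  proof -
    have "(1 + 3*\<delta>) * cS / qlow \<le> (1 + \<rho>) * cS / qlow"
      using \<delta>(3) that(1) ql by (intro divide_right_mono mult_right_mono) auto
    then show ?thesis
      using cD_zero[OF that(1,2)] that(3) by simp
  qed
  have "eventually (\<lambda>cS. 0 < cS \<and> 2 * qlow / \<delta> \<le> cS \<and>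
      - ln (\<delta> / (4 * (2 * (1 + \<delta>) / \<delta> + 1) * real CARD('a))) / (\<delta> * \<eta>\<^sup>2 / qlow) \<le> cS) at_top"
    by (intro eventually_conj eventually_gt_at_top eventually_ge_at_top)
  then show "eventually (\<lambda>cS. WADD f0 P1 (tI q f0 cS (cD cS)) / ennreal cS
      \<le> ennreal (2 * (1 + 6*\<delta>) / qlow)) at_top"
  proof (rule eventually_mono, elim conjE)
    fix cS :: real
    assume cS: "0 < cS" "2 * qlow / \<delta> \<le> cS"
      and large: "- ln (\<delta> / (4 * (2 * (1 + \<delta>) / \<delta> + 1) * real CARD('a))) / (\<delta> * \<eta>\<^sup>2 / qlow) \<le> cS"
    show "WADD f0 P1 (tI q f0 cS (cD cS)) / ennreal cS \<le> ennreal (2 * (1 + 6*\<delta>) / qlow)"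
    proof (rule WADD_tI_div_le[OF qc ql \<delta>(1,2) \<open>0 < \<eta>\<close> _ _ cS large])
      show "qlow / (1 + \<delta>) \<le> q g" if "f \<in> P1" "\<And>x. \<bar>pmf g x - pmf f x\<bar> < \<eta>" for f g
        using close[OF that] .
      show "cD cS n \<le> 0" if "1 \<le> n" "real n \<le> (1 + 3*\<delta>) * cS / qlow" for n
        using cD[OF cS(1) that] .
    qed
  qed
qed

theorem theorem4:
  fixes f0 :: "'a::finite pmf"
    and q :: "'a pmf \<Rightarrow> real"
    and L qlow \<rho> :: real
    and P1 :: "'a pmf set"
    and cD :: "real \<Rightarrow> nat \<Rightarrow> real"
  assumes qc: "quasiconcave_pmf q"
    and lip: "lipschitz_l1_pmf L q"
    and q0: "q f0 < 0" and qlow: "0 < qlow"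
    and P1_ne: "P1 \<noteq> {}" and P1_sub: "P1 \<subseteq> {f. qlow \<le> q f}"
    and rho: "0 < \<rho>"
    and cD_nonneg: "\<And>cS n. 0 < cS \<Longrightarrow> 1 \<le> n \<Longrightarrow> 0 \<le> cD cS n"
    and cD_zero: "\<And>cS n. 0 < cS \<Longrightarrow> 1 \<le> n \<Longrightarrow> real n \<le> (1 + \<rho>) * cS / qlow \<Longrightarrow> cD cS n = 0"
  shows "Limsup at_top (\<lambda>cS::real. WADD f0 P1 (tI q f0 cS (cD cS)) / ennreal cS)
           \<le> ennreal (2 / qlow)"
proof -
  obtain g where "g \<in> P1"
    using P1_ne by auto
  then have L: "0 < L"
    using lipschitz_l1_pmf_pos[OF lip, of g f0] P1_sub q0 qlow by fastforce
  show ?thesis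
  proof (rule ennreal_le_epsilon)
    fix e :: real
    assume "0 < e"
    define \<delta> where "\<delta> = min (min (\<rho>/3) (1/2)) (e * qlow / 12)"
    have \<delta>: "0 < \<delta>" "\<delta> \<le> 1/2" "\<delta> \<le> \<rho>/3" "\<delta> \<le> e * qlow / 12"
      unfolding \<delta>_def using rho \<open>0 < e\<close> qlow by auto
    have "Limsup at_top (\<lambda>cS::real. WADD f0 P1 (tI q f0 cS (cD cS)) / ennreal cS)
        \<le> ennreal (2 * (1 + 6*\<delta>) / qlow)"
      by (rule Limsup_WADD_tI_le[OF qc lip L qlow P1_sub \<delta>(1-3) cD_zero])
    also have "\<dots> \<le> ennreal (2 / qlow + e)"
      using \<delta>(4) qlow by (intro ennreal_leI) (simp add: field_simps)
    also have "\<dots> = ennreal (2 / qlow) + ennreal e"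
      using qlow \<open>0 < e\<close> by (intro ennreal_plus) auto
    finally show "Limsup at_top (\<lambda>cS::real. WADD f0 P1 (tI q f0 cS (cD cS)) / ennreal cS)
        \<le> ennreal (2 / qlow) + ennreal e" .
  qed
qed

end
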